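(* Let $b \le 0$, let $\tau \ge 0$ be finite, and let $x_0 \ge 0$. Let $x(t)$ be the solution of the delay differential equation $$\frac{dx(t)}{dt} = x(t) - x^2(t)\exp\{-b\,x(t-\tau)\} \qquad (t>0)$$ with constant history $x(t) = x_0$ for $t \le 0$. Then $x(t)$ is bounded for all $t \ge 0$. Moreover, if $b < 0$, there exists a time $t_0 = t_0(x_0,\tau)$ such that $$0 \le x(t) \le 1 \qquad \text{for all } t \ge t_0.$$
   Context: This is the evolution equation $\frac{dx}{dt} = \sigma_1 x - \sigma_2 x^2 \exp\{-b x(t-\tau)\}$ for a dimensionless population $x(t)$ with nonlinear delayed carrying capacity $y = \exp\{b x(t-\tau)\}$, specialized to the case $\sigma_1 = \sigma_2 = 1$ ("gain and competition"); $b$ is the production parameter and $\tau$ the time delay. *)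

theory Defs
  imports "HOL-Analysis.Analysis"
begin

end

theory Submission
  imports Defs
begin

text \<open>
  Nonnegativity: zero is an equilibrium and the right-hand side is \<open>x\<close> times a locally bounded
  factor, so a Gronwall argument shows that a solution which touches zero stays there.
  Boundedness: for \<open>b \<le> 0\<close> the delayed factor \<open>exp (- b x(t - \<tau>))\<close> is at least \<open>1\<close>, so
  \<open>x' < 0\<close> whenever \<open>x > 1\<close> and no level \<open>K \<ge> 1\<close> can be crossed upwards.
  Absorption for \<open>b < 0\<close>: as long as \<open>x > 1\<close> everywhere, \<open>x' \<le> 1 - exp (- b) < 0\<close>,
  so \<open>x\<close> must drop below \<open>1\<close> in finite time, and then it stays there.
\<close>

lemma zero_if_deriv_linearly_bounded:
  fixes u D :: "real \<Rightarrow> real"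
  assumes "a \<le> c" and cont: "continuous_on {a..c} u"
    and deriv: "\<And>t. a < t \<Longrightarrow> t < c \<Longrightarrow> (u has_real_derivative D t) (at t)"
    and bound: "\<And>t. a < t \<Longrightarrow> t < c \<Longrightarrow> \<bar>D t\<bar> \<le> M * \<bar>u t\<bar>"
    and "u a = 0"
  shows "u c = 0"
proof -
  define v where "v t = (u t)\<^sup>2 * exp (- 2 * M * t)" for t
  have "v c \<le> v a"
  proof (rule DERIV_nonpos_imp_decreasing_open[OF \<open>a \<le> c\<close>])
    show "continuous_on {a..c} v"
      unfolding v_def by (intro continuous_intros cont)
    fix t assume t: "a < t" "t < c"
    have "(v has_real_derivative 2 * exp (- 2 * M * t) * (u t * D t - M * (u t)\<^sup>2)) (at t)"
      unfolding v_def using deriv[OF t]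
      by (auto intro!: derivative_eq_intros simp: algebra_simps power2_eq_square)
    moreover have "u t * D t \<le> M * (u t)\<^sup>2"
    proof -
      have "u t * D t \<le> \<bar>u t\<bar> * \<bar>D t\<bar>" by (simp add: abs_mult[symmetric])
      also have "\<dots> \<le> \<bar>u t\<bar> * (M * \<bar>u t\<bar>)" using bound[OF t] by (simp add: mult_left_mono)
      also have "\<dots> = M * (u t)\<^sup>2" by (simp add: power2_eq_square)
      finally show ?thesis .
    qed
    ultimately show "\<exists>y. (v has_real_derivative y) (at t) \<and> y \<le> 0"
      by (intro exI conjI) (auto intro: mult_nonneg_nonpos)
  qed
  then have "(u c)\<^sup>2 * exp (- 2 * M * c) \<le> 0" using \<open>u a = 0\<close> by (simp add: v_def)
  then show ?thesis by (simp add: mult_le_0_iff)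
qed

lemma le_if_deriv_nonpos_above:
  fixes f D :: "real \<Rightarrow> real"
  assumes "a \<le> c" and cont: "continuous_on {a..c} f"
    and deriv: "\<And>t. a < t \<Longrightarrow> t < c \<Longrightarrow> (f has_real_derivative D t) (at t)"
    and nonpos: "\<And>t. a < t \<Longrightarrow> t < c \<Longrightarrow> f t > K \<Longrightarrow> D t \<le> 0"
    and "f a \<le> K"
  shows "f c \<le> K"
proof (rule ccontr)
  assume fc: "\<not> f c \<le> K"
  define S where "S = {a..c} \<inter> f -` {..K}"
  have S_closed: "closed S" unfolding S_def
    by (rule continuous_closed_preimage[OF cont]) auto
  have S_nonempty: "S \<noteq> {}" using assms(1,5) by (auto simp: S_def)
  have S_bdd: "bdd_above S" unfolding S_def by (auto intro: bdd_aboveI[where M = c])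
  define t1 where "t1 = Sup S"
  have "t1 \<in> S" unfolding t1_def by (rule closed_contains_Sup[OF S_nonempty S_bdd S_closed])
  then have t1: "a \<le> t1" "t1 \<le> c" "f t1 \<le> K" by (auto simp: S_def)
  have above: "f t > K" if "t1 < t" "t \<le> c" for t
  proof (rule ccontr)
    assume "\<not> K < f t"
    then have "t \<in> S" using that t1 by (auto simp: S_def)
    then have "t \<le> t1" unfolding t1_def using S_bdd by (rule cSup_upper)
    with that show False by simp
  qed
  \<comment> \<open>past the last time at which \<open>f \<le> K\<close>, the function is nonincreasing\<close>
  have "f c \<le> f t1"
  proof (rule DERIV_nonpos_imp_decreasing_open[OF \<open>t1 \<le> c\<close>])
    show "continuous_on {t1..c} f" by (rule continuous_on_subset[OF cont]) (use t1 in auto)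
    show "\<exists>y. (f has_real_derivative y) (at t) \<and> y \<le> 0" if "t1 < t" "t < c" for t
      using deriv[of t] nonpos[of t] above[of t] that t1 by auto
  qed
  with t1 fc show False by simp
qed

locale delayed_logistic =
  fixes x :: "real \<Rightarrow> real" and b \<tau> x0 :: real
  assumes delay_nonneg: "\<tau> \<ge> 0"
    and history: "\<And>t. t \<le> 0 \<Longrightarrow> x t = x0"
    and continuous: "continuous_on {0..} x"
    and ode: "\<And>t. t > 0 \<Longrightarrow>
       (x has_real_derivative (x t - (x t)\<^sup>2 * exp (- b * x (t - \<tau>)))) (at t)"
begin

definition rate :: "real \<Rightarrow> real"
  where "rate t = x t - (x t)\<^sup>2 * exp (- b * x (t - \<tau>))"

lemma has_real_derivative_rate: "t > 0 \<Longrightarrow> (x has_real_derivative rate t) (at t)"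
  using ode by (simp add: rate_def)

lemma initial_value: "x 0 = x0"
  using history by simp

lemma continuous_on_UNIV: "continuous_on UNIV x"
proof -
  have "continuous_on {..0} x"
    using continuous_on_const[of "{..0}" x0]
    by (rule continuous_on_cong[THEN iffD1, rotated 2]) (simp_all add: history)
  moreover have "{..0::real} \<union> {0..} = UNIV" by auto
  ultimately show ?thesis
    using continuous_on_closed_Un[OF closed_atMost closed_atLeast _ continuous] by metis
qed

lemma rate_linearly_bounded: "\<exists>M. \<forall>t\<in>{0<..<s}. \<bar>rate t\<bar> \<le> M * \<bar>x t\<bar>"
proof -
  have "bounded (x ` {-\<tau>..s})"
    by (intro compact_imp_bounded compact_continuous_image continuous_on_subset[OF continuous_on_UNIV]) auto
  then obtain B where "\<forall>t\<in>{-\<tau>..s}. \<bar>x t\<bar> \<le> B"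
    unfolding bounded_iff by auto
  then have B: "\<And>t. t \<in> {-\<tau>..s} \<Longrightarrow> \<bar>x t\<bar> \<le> B" by blast
  have "\<bar>rate t\<bar> \<le> (1 + B * exp (\<bar>b\<bar> * B)) * \<bar>x t\<bar>" if t: "0 < t" "t < s" for t
  proof -
    have xt: "\<bar>x t\<bar> \<le> B" and x_delayed: "\<bar>x (t - \<tau>)\<bar> \<le> B"
      using B t delay_nonneg by auto
    have "- b * x (t - \<tau>) \<le> \<bar>b\<bar> * \<bar>x (t - \<tau>)\<bar>" by (simp add: abs_mult[symmetric])
    also have "\<dots> \<le> \<bar>b\<bar> * B" using x_delayed by (simp add: mult_left_mono)
    finally have E: "exp (- b * x (t - \<tau>)) \<le> exp (\<bar>b\<bar> * B)" by simp
    have "\<bar>1 - x t * exp (- b * x (t - \<tau>))\<bar> \<le> 1 + \<bar>x t\<bar> * exp (- b * x (t - \<tau>))"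
      using abs_triangle_ineq4[of 1 "x t * exp (- b * x (t - \<tau>))"] by (simp add: abs_mult)
    also have "\<dots> \<le> 1 + B * exp (\<bar>b\<bar> * B)" using xt E by (simp add: mult_mono)
    finally have "\<bar>x t\<bar> * \<bar>1 - x t * exp (- b * x (t - \<tau>))\<bar> \<le> \<bar>x t\<bar> * (1 + B * exp (\<bar>b\<bar> * B))"
      by (simp add: mult_left_mono)
    moreover have "\<bar>rate t\<bar> = \<bar>x t\<bar> * \<bar>1 - x t * exp (- b * x (t - \<tau>))\<bar>"
      by (simp add: rate_def abs_mult[symmetric] algebra_simps power2_eq_square)
    ultimately show ?thesis by (simp add: mult.commute)
  qed
  then show ?thesis by (intro exI[of _ "1 + B * exp (\<bar>b\<bar> * B)"]) auto
qed

lemma nonneg: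
  assumes "x0 \<ge> 0"
  shows "x t \<ge> 0"
proof (rule ccontr)
  assume neg: "\<not> 0 \<le> x t"
  then have "t > 0" using history[of t] assms by force
  then obtain t1 where t1: "0 \<le> t1" "t1 \<le> t" "x t1 = 0"
    using IVT2'[of x t 0 0] continuous_on_subset[OF continuous_on_UNIV] neg initial_value assms
    by auto
  obtain M where M: "\<And>s. s \<in> {0<..<t} \<Longrightarrow> \<bar>rate s\<bar> \<le> M * \<bar>x s\<bar>"
    using rate_linearly_bounded by blast
  have "x t = 0"
    by (rule zero_if_deriv_linearly_bounded[OF \<open>t1 \<le> t\<close> continuous_on_subset[OF continuous_on_UNIV]
          _ _ \<open>x t1 = 0\<close>, of rate M])
       (use t1 M has_real_derivative_rate in auto)
  with neg show False by simp
qed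

context
  assumes b_nonpos: "b \<le> 0" and init_nonneg: "x0 \<ge> 0"
begin

lemma rate_neg_above_one:
  assumes "x t > 1"
  shows "rate t < 0"
proof -
  have "exp (- b * x (t - \<tau>)) \<ge> 1"
    using b_nonpos nonneg[OF init_nonneg, of "t - \<tau>"] by (simp add: mult_nonpos_nonneg)
  then have "(x t)\<^sup>2 * exp (- b * x (t - \<tau>)) \<ge> (x t)\<^sup>2"
    using mult_left_mono[of 1 "exp (- b * x (t - \<tau>))" "(x t)\<^sup>2"] by simp
  moreover have "(x t)\<^sup>2 > x t" using assms by (simp add: power2_eq_square)
  ultimately show ?thesis by (simp add: rate_def)
qed

lemma stays_below:
  assumes "0 \<le> a" "a \<le> t" "x a \<le> K" "K \<ge> 1"
  shows "x t \<le> K"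
  by (rule le_if_deriv_nonpos_above[OF \<open>a \<le> t\<close> continuous_on_subset[OF continuous_on_UNIV] _ _ \<open>x a \<le> K\<close>,
        of rate])
     (use assms has_real_derivative_rate rate_neg_above_one in \<open>auto intro: less_imp_le\<close>)

lemma bounded: "bounded (x ` {0..})"
proof -
  have "\<bar>x t\<bar> \<le> max x0 1" if "t \<ge> 0" for t
    using stays_below[of 0 t "max x0 1"] nonneg[OF init_nonneg, of t] that initial_value by simp
  then show ?thesis unfolding bounded_iff by auto
qed

context
  assumes b_neg: "b < 0"
begin

lemma reaches_unit_interval: "\<exists>t\<ge>0. x t \<le> 1"
proof (rule ccontr)
  assume "\<not> (\<exists>t\<ge>0. x t \<le> 1)"
  then have above: "x t > 1" for t
    using initial_value history[of t] by (cases "t \<ge> 0") force+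
  define \<delta> where "\<delta> = exp (- b) - 1"
  have "\<delta> > 0" using b_neg by (simp add: \<delta>_def)
  \<comment> \<open>with \<open>x(t - \<tau>) > 1\<close> the delayed factor is at least \<open>exp (- b) > 1\<close>\<close>
  have rate_le: "rate t \<le> - \<delta>" for t
  proof -
    have "exp (- b) \<le> exp (- b * x (t - \<tau>))" using b_neg above[of "t - \<tau>"] by simp
    then have "(x t)\<^sup>2 * exp (- b) \<le> (x t)\<^sup>2 * exp (- b * x (t - \<tau>))"
      by (rule mult_left_mono) simp
    then have "rate t \<le> x t * (1 - x t * exp (- b))"
      by (simp add: rate_def power2_eq_square algebra_simps)
    also have "\<dots> \<le> 1 * (1 - x t * exp (- b))"
    proof (rule mult_right_mono_neg)
      have "x t * exp (- b) \<ge> 1 * 1" using above[of t] b_neg by (intro mult_mono) auto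
      then show "1 - x t * exp (- b) \<le> 0" by simp
    qed (use above[of t] in simp)
    also have "\<dots> \<le> - \<delta>" using above[of t] b_neg by (simp add: \<delta>_def)
    finally show ?thesis .
  qed
  define T where "T = x0 / \<delta> + 1"
  have "T > 0" using init_nonneg \<open>\<delta> > 0\<close> by (simp add: T_def add_nonneg_pos)
  have "x T + \<delta> * T \<le> x 0 + \<delta> * 0"
  proof (rule DERIV_nonpos_imp_decreasing_open[of 0 T "\<lambda>t. x t + \<delta> * t"])
    show "continuous_on {0..T} (\<lambda>t. x t + \<delta> * t)"
      by (intro continuous_intros continuous_on_subset[OF continuous_on_UNIV]) auto
    show "\<exists>y. ((\<lambda>t. x t + \<delta> * t) has_real_derivative y) (at t) \<and> y \<le> 0" if "0 < t" for t
      using has_real_derivative_rate[OF that] rate_le[of t]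
      by (auto intro!: exI derivative_eq_intros)
  qed (use \<open>T > 0\<close> in simp)
  also have "\<dots> = \<delta> * T - \<delta>" using \<open>\<delta> > 0\<close> initial_value by (simp add: T_def field_simps)
  finally show False using above[of T] \<open>\<delta> > 0\<close> by simp
qed

lemma eventually_in_unit_interval: "\<exists>t0. \<forall>t\<ge>t0. 0 \<le> x t \<and> x t \<le> 1"
proof -
  obtain t0 where "t0 \<ge> 0" "x t0 \<le> 1" using reaches_unit_interval by blast
  then show ?thesis using stays_below[of t0 _ 1] nonneg[OF init_nonneg] by auto
qed

end

end

end

theorem proposition1:
  fixes x :: "real \<Rightarrow> real" and b \<tau> x0 :: real
  assumes hb: "b \<le> 0" and htau: "\<tau> \<ge> 0" and hx0: "x0 \<ge> 0"
    and hist: "\<And>t. t \<le> 0 \<Longrightarrow> x t = x0"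
    and cont: "continuous_on {0..} x"
    and ode: "\<And>t. t > 0 \<Longrightarrow>
       (x has_real_derivative (x t - (x t)^2 * exp (- b * x (t - \<tau>)))) (at t)"
  shows "bounded (x ` {0..}) \<and>
         (b < 0 \<longrightarrow> (\<exists>t0. \<forall>t\<ge>t0. 0 \<le> x t \<and> x t \<le> 1))"
proof -
  interpret delayed_logistic x b \<tau> x0
    using htau hist cont ode by unfold_locales auto
  show ?thesis
    using bounded[OF hb hx0] eventually_in_unit_interval[OF hb hx0] by blast
qed

end
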